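(* Fix a target task and the data below. For a source task $(\mu,f)\in\mathcal{P}(\mathcal{X}_S)\times A_S$ define its transfer risk $$\mathcal{C}(\mu,f):=\inf_{T_0^X\in\mathbb{T}_0^X,\;T_0^Y\in\mathbb{T}_0^Y} C\Big(\mathcal{E}^O\big(T_0^Y(\cdot,f(T_0^X(\cdot)))\big),\;D\big(T_0^X\#\mathrm{Law}(X_T),\mu\big)\Big).$$ Then for every fixed $f\in A_S$, the map $\mu\mapsto\mathcal{C}(\mu,f)$ is continuous on the metric space $(\mathcal{P}(\mathcal{X}_S),D)$.
   Context: $(\mathcal{X}_T,\|\cdot\|_{\mathcal{X}_T})$, $(\mathcal{Y}_T,\|\cdot\|_{\mathcal{Y}_T})$, $(\mathcal{X}_S,\|\cdot\|_{\mathcal{X}_S})$, $(\mathcal{Y}_S,\|\cdot\|_{\mathcal{Y}_S})$ are Banach spaces (target/source input and output spaces); $X_T$ is an $\mathcal{X}_T$-valued random variable (target input). $A_S$ is a set of functions $\mathcal{X}_S\to\mathcal{Y}_S$ (admissible pretrained source models) and $A_T$ a set of functions $\mathcal{X}_T\to\mathcal{Y}_T$. $\mathbb{T}_0^X$ is a nonempty set of maps $\mathcal{X}_T\to\mathcal{X}_S$ (initial input transports) and $\mathbb{T}_0^Y$ a nonempty set of maps $\mathcal{X}_T\times\mathcal{Y}_S\to\mathcal{Y}_T$ (initial output transports) such that every intermediate model $x\mapsto T_0^Y(x,f(T_0^X(x)))$ with $f\in A_S$ lies in $A_T$. $\mathcal{E}^O:A_T\to[0,\infty)$ is an output transport risk.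 $D$ is a metric on the set $\mathcal{P}(\mathcal{X}_S)$ of probability measures on $\mathcal{X}_S$; the input transport risk of $T_0^X$ for source input law $\mu$ is $D(T_0^X\#\mathrm{Law}(X_T),\mu)$, where $\#$ denotes pushforward. $C:\mathbb{R}\times\mathbb{R}\to\mathbb{R}$ satisfies $C(0,0)=0$, is non-decreasing in each argument when the other is fixed, and there is $L>0$ with $|C(a,b)-C(a',b')|\le L(|a-a'|+|b-b'|)$ for all $a,a',b,b'\ge 0$. *)

theory Defs
  imports "HOL-Probability.Probability"
begin

definition prob_measures :: "'a::topological_space measure set" where
  "prob_measures = {\<mu>. prob_space \<mu> \<and> sets \<mu> = sets (borel :: 'a measure)}"

definition transfer_risk ::
  "(real \<Rightarrow> real \<Rightarrow> real) \<Rightarrow> (('xt \<Rightarrow> 'yt) \<Rightarrow> real) \<Rightarrow>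
   ('xs::topological_space measure \<Rightarrow> 'xs measure \<Rightarrow> real) \<Rightarrow>
   ('xt \<Rightarrow> 'xs) set \<Rightarrow> ('xt \<Rightarrow> 'ys \<Rightarrow> 'yt) set \<Rightarrow> 'xt measure \<Rightarrow>
   'xs measure \<Rightarrow> ('xs \<Rightarrow> 'ys) \<Rightarrow> real" where
  "transfer_risk C EO D TX TY LawXT \<mu> f =
     Inf {C (EO (\<lambda>x. T0Y x (f (T0X x)))) (D (distr LawXT borel T0X) \<mu>) | T0X T0Y.
            T0X \<in> TX \<and> T0Y \<in> TY}"

end

theory Submission
  imports Defs
begin

text \<open>Each candidate transport pair contributes a risk that depends on \<open>\<mu>\<close> only through
  \<open>D(T\<^sub>0\<^sup>X # Law(X\<^sub>T), \<mu>)\<close>; by the reverse triangle inequality and the Lipschitz bound on \<open>C\<close>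
  it is \<open>L\<close>-Lipschitz in \<open>\<mu>\<close>. All these risks are nonnegative, and an infimum of a
  nonempty, bounded below family of \<open>L\<close>-Lipschitz functions is again \<open>L\<close>-Lipschitz, hence
  continuous.\<close>

lemma (in Metric_space) Lipschitz_continuous_map_INF:
  fixes g :: "'i \<Rightarrow> 'a \<Rightarrow> real"
  assumes "I \<noteq> {}"
    and bdd: "\<And>x. x \<in> M \<Longrightarrow> bdd_below ((\<lambda>i. g i x) ` I)"
    and lip: "\<And>i x y. i \<in> I \<Longrightarrow> x \<in> M \<Longrightarrow> y \<in> M \<Longrightarrow> g i x \<le> g i y + B * d x y"
  shows "Lipschitz_continuous_map (metric (M, d)) euclidean_metric (\<lambda>x. INF i\<in>I. g i x)"
proof -
  have INF_le: "(INF i\<in>I. g i x) \<le> (INF i\<in>I. g i y) + B * d x y" if "x \<in> M" "y \<in> M" for x y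
  proof -
    have "(INF i\<in>I. g i x) - B * d x y \<le> g i y" if "i \<in> I" for i
      using cINF_lower[OF bdd \<open>i \<in> I\<close>] lip[OF \<open>i \<in> I\<close>] \<open>x \<in> M\<close> \<open>y \<in> M\<close> by fastforce
    then have "(INF i\<in>I. g i x) - B * d x y \<le> (INF i\<in>I. g i y)"
      using \<open>I \<noteq> {}\<close> by (intro cINF_greatest) auto
    then show ?thesis by simp
  qed
  have "dist (INF i\<in>I. g i x) (INF i\<in>I. g i y) \<le> B * d x y" if "x \<in> M" "y \<in> M" for x y
    using INF_le[OF that] INF_le[OF that(2,1)] commute[of x y] by (simp add: dist_real_def abs_le_iff)
  then show ?thesis
    unfolding Lipschitz_continuous_map_def by auto
qed

lemma distr_in_prob_measures:
  assumes "prob_space N" and "sets N = sets borel" and "T \<in> borel_measurable borel"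
  shows "distr N borel T \<in> prob_measures"
proof -
  have "T \<in> borel_measurable N"
    using assms(2,3) measurable_cong_sets[of N borel borel borel] by simp
  then show ?thesis
    unfolding prob_measures_def using prob_space.prob_space_distr[OF assms(1)] by simp
qed

lemma nonneg_if_mono_and_zero_at_origin:
  fixes C :: "real \<Rightarrow> real \<Rightarrow> real"
  assumes "C 0 0 = 0"
    and "\<And>a a' b. a \<le> a' \<Longrightarrow> C a b \<le> C a' b"
    and "\<And>a b b'. b \<le> b' \<Longrightarrow> C a b \<le> C a b'"
    and "a \<ge> 0" and "b \<ge> 0"
  shows "C a b \<ge> 0"
  using assms(1) assms(2)[OF \<open>a \<ge> 0\<close>, of 0] assms(3)[OF \<open>b \<ge> 0\<close>, of a] by linarith

lemma (in Metric_space) cost_mdist_le_add: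
  fixes C :: "real \<Rightarrow> real \<Rightarrow> real"
  assumes lip: "\<And>b b'. b \<ge> 0 \<Longrightarrow> b' \<ge> 0 \<Longrightarrow> \<bar>C a b - C a b'\<bar> \<le> L * \<bar>b - b'\<bar>"
    and "L \<ge> 0" and "\<nu> \<in> M" "\<mu> \<in> M" "\<mu>' \<in> M"
  shows "C a (d \<nu> \<mu>) \<le> C a (d \<nu> \<mu>') + L * d \<mu> \<mu>'"
proof -
  have "C a (d \<nu> \<mu>) \<le> C a (d \<nu> \<mu>') + L * \<bar>d \<nu> \<mu> - d \<nu> \<mu>'\<bar>"
    using lip[of "d \<nu> \<mu>" "d \<nu> \<mu>'"] by (simp add: abs_le_iff)
  also have "\<dots> \<le> C a (d \<nu> \<mu>') + L * d \<mu> \<mu>'"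
    using mdist_reverse_triangle[of \<mu> \<nu> \<mu>'] commute[of \<mu> \<nu>] assms(2-5)
    by (simp add: mult_left_mono)
  finally show ?thesis .
qed

theorem proposition6:
  fixes M :: "'w measure"
    and XT :: "'w \<Rightarrow> 'xt::banach"
    and AS :: "('xs::banach \<Rightarrow> 'ys::banach) set"
    and AT :: "('xt \<Rightarrow> 'yt::banach) set"
    and TX :: "('xt \<Rightarrow> 'xs) set"
    and TY :: "('xt \<Rightarrow> 'ys \<Rightarrow> 'yt) set"
    and EO :: "('xt \<Rightarrow> 'yt) \<Rightarrow> real"
    and D :: "'xs measure \<Rightarrow> 'xs measure \<Rightarrow> real"
    and C :: "real \<Rightarrow> real \<Rightarrow> real"
    and L :: real
    and f :: "'xs \<Rightarrow> 'ys"
  assumes M: "prob_space M"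
    and XT: "XT \<in> borel_measurable M"
    and TX_ne: "TX \<noteq> {}" and TY_ne: "TY \<noteq> {}"
    and TX_meas: "\<And>T. T \<in> TX \<Longrightarrow> T \<in> borel_measurable borel"
    and inter: "\<And>T0X T0Y g. T0X \<in> TX \<Longrightarrow> T0Y \<in> TY \<Longrightarrow> g \<in> AS \<Longrightarrow>
                 (\<lambda>x. T0Y x (g (T0X x))) \<in> AT"
    and EO_nonneg: "\<And>g. g \<in> AT \<Longrightarrow> EO g \<ge> 0"
    and D_metric: "Metric_space prob_measures D"
    and C00: "C 0 0 = 0"
    and C_mono1: "\<And>a a' b. a \<le> a' \<Longrightarrow> C a b \<le> C a' b"
    and C_mono2: "\<And>a b b'. b \<le> b' \<Longrightarrow> C a b \<le> C a b'"
    and L_pos: "L > 0"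
    and C_lip: "\<And>a a' b b'. a \<ge> 0 \<Longrightarrow> a' \<ge> 0 \<Longrightarrow> b \<ge> 0 \<Longrightarrow> b' \<ge> 0 \<Longrightarrow>
                 \<bar>C a b - C a' b'\<bar> \<le> L * (\<bar>a - a'\<bar> + \<bar>b - b'\<bar>)"
    and f: "f \<in> AS"
  shows "continuous_map (Metric_space.mtopology prob_measures D) euclideanreal
           (\<lambda>\<mu>. transfer_risk C EO D TX TY (distr M borel XT) \<mu> f)"
proof -
  interpret Metric_space prob_measures D by (rule D_metric)
  define law where "law = (\<lambda>T0X. distr (distr M borel XT) (borel :: 'xs measure) T0X)"
  define risk where "risk = (\<lambda>(T0X, T0Y) \<mu>. C (EO (\<lambda>x. T0Y x (f (T0X x)))) (D (law T0X) \<mu>))"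
  have law: "law T0X \<in> prob_measures" if "T0X \<in> TX" for T0X
    using that TX_meas M XT unfolding law_def
    by (intro distr_in_prob_measures prob_space.prob_space_distr) auto
  have EO: "EO (\<lambda>x. T0Y x (f (T0X x))) \<ge> 0" if "T0X \<in> TX" "T0Y \<in> TY" for T0X T0Y
    using that inter f EO_nonneg by blast
  have C_lip_snd: "\<bar>C a b - C a b'\<bar> \<le> L * \<bar>b - b'\<bar>" if "a \<ge> 0" "b \<ge> 0" "b' \<ge> 0" for a b b'
    using C_lip[OF that(1,1,2,3)] by simp
  have "bdd_below ((\<lambda>i. risk i \<mu>) ` (TX \<times> TY))" if "\<mu> \<in> prob_measures" for \<mu>
    using nonneg_if_mono_and_zero_at_origin[of C, OF C00 C_mono1 C_mono2] EO law that
    by (intro bdd_belowI[of _ 0]) (auto simp: risk_def nonneg)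
  moreover have "risk i \<mu> \<le> risk i \<mu>' + L * D \<mu> \<mu>'"
    if "i \<in> TX \<times> TY" "\<mu> \<in> prob_measures" "\<mu>' \<in> prob_measures" for i \<mu> \<mu>'
    using that EO law L_pos C_lip_snd by (auto simp: risk_def intro!: cost_mdist_le_add)
  ultimately have "Lipschitz_continuous_map (metric (prob_measures, D)) euclidean_metric
                     (\<lambda>\<mu>. INF i\<in>TX \<times> TY. risk i \<mu>)"
    using TX_ne TY_ne by (intro Lipschitz_continuous_map_INF[where B = L]) auto
  moreover have "transfer_risk C EO D TX TY (distr M borel XT) \<mu> f = (INF i\<in>TX \<times> TY. risk i \<mu>)"
    for \<mu>
    unfolding transfer_risk_def risk_def law_def
    by (rule arg_cong[of _ _ Inf]) (fastforce simp: image_iff)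
  ultimately show ?thesis
    using Lipschitz_continuous_imp_continuous_map by fastforce
qed

end
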